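(* Let $f$ be a $C^{(3)}$ function on an open interval containing $0$ with $f(0)=f'(0)=0$ and $f''>0$, so that its graph is locally a strictly convex curve $X$ tangent to the $x$-axis at the origin $P=(0,0)$, with curvature $\kappa(P)=f''(0)$ there. For sufficiently small $h>0$ let $s=s(h)<0<t=t(h)$ be the numbers with $f(s)=f(t)=h$, and define $$\alpha_P(h)=\sqrt{h}\,\frac{f'(t)-f'(s)}{-f'(s)f'(t)}.$$ Then $$\lim_{h\to 0^+}\alpha_P(h)=\frac{\sqrt{2}}{\sqrt{\kappa(P)}}.$$ *)

theory Defs
  imports "HOL-Analysis.Analysis"
begin

end

theory Submission
  imports Defs
begin

text \<open>
  Because \<open>f(s) = f(t) = h\<close> and \<open>f'(s) < 0 < f'(t)\<close>, the quantity splits as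
  \<open>\<surd>h / |f'(t)| + \<surd>h / |f'(s)|\<close>, and each summand is \<open>1 / \<surd>(f'(x)\<^sup>2 / f(x))\<close> at a point
  \<open>x\<close> (namely \<open>t\<close> or \<open>s\<close>) that tends to \<open>0\<close> with \<open>h\<close>. By l'Hopital's rule
  \<open>f'(x)\<^sup>2 / f(x) \<rightarrow> 2 f''(0)\<close>, so each summand tends to \<open>1 / \<surd>(2 f''(0))\<close>.
\<close>

lemma strict_mono_on_if_DERIV_pos:
  fixes f f' :: "real \<Rightarrow> real"
  assumes I: "is_interval I"
    and der: "\<And>x. x \<in> I \<Longrightarrow> (f has_real_derivative f' x) (at x)"
    and pos: "\<And>x. x \<in> interior I \<Longrightarrow> f' x > 0"
  shows "strict_mono_on I f"
proof (rule strict_mono_onI)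
  fix x y assume xy: "x \<in> I" "y \<in> I" "x < y"
  have closed_sub: "{x..y} \<subseteq> I"
    using I xy by (meson atLeastAtMost_iff is_interval_1 subsetI)
  have open_sub: "{x<..<y} \<subseteq> interior I"
    using closed_sub by (intro interior_maximal) auto
  show "f x < f y"
  proof (rule DERIV_pos_imp_increasing_open[OF \<open>x < y\<close>])
    fix z assume "x < z" "z < y"
    then have "z \<in> interior I" using open_sub by auto
    then show "\<exists>d. (f has_real_derivative d) (at z) \<and> d > 0"
      using der pos interior_subset by blast
  next
    show "continuous_on {x..y} f"
      using closed_sub der by (intro continuous_at_imp_continuous_on) (blast intro: DERIV_isCont)
  qed
qed

lemma tendsto_deriv_squared_div:
  fixes f f1 f2 :: "real \<Rightarrow> real"
  assumes S: "open S" "c \<in> S"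
    and d1: "\<And>x. x \<in> S \<Longrightarrow> (f has_real_derivative f1 x) (at x)"
    and d2: "\<And>x. x \<in> S \<Longrightarrow> (f1 has_real_derivative f2 x) (at x)"
    and cont: "isCont f2 c"
    and zero: "f c = 0" "f1 c = 0"
    and nonzero: "\<And>x. x \<in> S - {c} \<Longrightarrow> f x \<noteq> 0 \<and> f1 x \<noteq> 0"
  shows "((\<lambda>x. f1 x ^ 2 / f x) \<longlongrightarrow> 2 * f2 c) (at c)"
proof (rule lhopital[where f' = "\<lambda>x. 2 * f1 x * f2 x" and g' = f1])
  have near: "\<forall>\<^sub>F x in at c. x \<in> S - {c}"
    using eventually_at_in_open[OF S] .
  show "((\<lambda>x. f1 x ^ 2) \<longlongrightarrow> 0) (at c)"
    using DERIV_isCont[OF d2[OF \<open>c \<in> S\<close>]] zero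
    by (metis isCont_def tendsto_power power_zero_numeral)
  show "(f \<longlongrightarrow> 0) (at c)"
    using DERIV_isCont[OF d1[OF \<open>c \<in> S\<close>]] zero by (simp add: isCont_def)
  show "\<forall>\<^sub>F x in at c. f x \<noteq> 0" "\<forall>\<^sub>F x in at c. f1 x \<noteq> 0"
    using near by (rule eventually_mono, use nonzero in blast)+
  show "\<forall>\<^sub>F x in at c. (f has_real_derivative f1 x) (at x)"
    using near by (auto elim!: eventually_mono intro: d1)
  show "\<forall>\<^sub>F x in at c. ((\<lambda>x. f1 x ^ 2) has_real_derivative 2 * f1 x * f2 x) (at x)"
    using near
    by (auto elim!: eventually_mono intro!: derivative_eq_intros d2 simp: power2_eq_square)
  have "((\<lambda>x. 2 * f2 x) \<longlongrightarrow> 2 * f2 c) (at c)"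
    using cont by (intro tendsto_mult_left) (simp add: isCont_def)
  moreover have "\<forall>\<^sub>F x in at c. 2 * f2 x = 2 * f1 x * f2 x / f1 x"
    using near by (rule eventually_mono) (use nonzero in force)
  ultimately show "((\<lambda>x. 2 * f1 x * f2 x / f1 x) \<longlongrightarrow> 2 * f2 c) (at c)"
    by (rule Lim_transform_eventually)
qed

lemma level_branch_tendsto_at_right:
  fixes f t :: "real \<Rightarrow> real"
  assumes mono: "strict_mono_on {0..<b} f" and "f 0 = 0"
    and t: "\<forall>\<^sub>F h in at_right 0. t h \<in> {0<..<b} \<and> f (t h) = h"
  shows "filterlim t (at_right 0) (at_right 0)"
proof (rule tendsto_imp_filterlim_at_right)
  show "(t \<longlongrightarrow> 0) (at_right 0)"
  proof (rule order_tendstoI)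
    fix e :: real assume "e < 0"
    with t show "\<forall>\<^sub>F h in at_right 0. e < t h"
      by (auto elim!: eventually_mono)
  next
    fix e :: real assume "0 < e"
    define e' where "e' = min e (b / 2)"
    obtain h0 where "t h0 \<in> {0<..<b}"
      using eventually_happens'[OF _ t] by auto
    then have "0 < b" by simp
    then have e': "0 < e'" "e' < b" "e' \<le> e"
      using \<open>0 < e\<close> by (auto simp: e'_def)
    then have "f 0 < f e'"
      using mono by (auto intro: strict_mono_onD)
    then have "\<forall>\<^sub>F h in at_right 0. h < f e'"
      using \<open>f 0 = 0\<close> order_tendstoD(2)[OF tendsto_ident_at] by simp
    with t show "\<forall>\<^sub>F h in at_right 0. t h < e"
    proof eventually_elim
      case (elim h)
      then have "\<not> f e' \<le> f (t h)" by simp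
      then have "t h < e'"
        using strict_mono_on_less_eq[OF mono, of e' "t h"] e' elim by auto
      with e' show ?case by simp
    qed
  qed
  show "\<forall>\<^sub>F h in at_right 0. 0 < t h"
    using t by (auto elim!: eventually_mono)
qed

lemma level_branch_tendsto_at_left:
  fixes f s :: "real \<Rightarrow> real"
  assumes mono: "strict_mono_on {0..<c} (\<lambda>x. f (- x))" and "f 0 = 0"
    and s: "\<forall>\<^sub>F h in at_right 0. s h \<in> {-c<..<0} \<and> f (s h) = h"
  shows "filterlim s (at_left 0) (at_right 0)"
proof -
  have "\<forall>\<^sub>F h in at_right 0. - s h \<in> {0<..<c} \<and> f (- (- s h)) = h"
    using s by (auto elim!: eventually_mono)
  then have "filterlim (\<lambda>h. - s h) (at_right 0) (at_right 0)"
    using mono \<open>f 0 = 0\<close> by (intro level_branch_tendsto_at_right[where f = "\<lambda>x. f (- x)"]) auto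
  moreover have "filterlim uminus (at_left (0::real)) (at_right 0)"
    by (simp add: filterlim_def at_left_minus)
  ultimately show ?thesis
    using filterlim_compose[of uminus "at_left 0" "at_right 0" "\<lambda>h. - s h"] by simp
qed

lemma tendsto_sqrt_div_abs_deriv_on_level_branch:
  fixes f f1 u :: "real \<Rightarrow> real"
  assumes lim: "((\<lambda>x. f1 x ^ 2 / f x) \<longlongrightarrow> L) (at 0)" and "L > 0"
    and u: "filterlim u (at 0) (at_right 0)"
    and level: "\<forall>\<^sub>F h in at_right 0. f (u h) = h"
  shows "((\<lambda>h. sqrt h / \<bar>f1 (u h)\<bar>) \<longlongrightarrow> 1 / sqrt L) (at_right 0)"
proof -
  have "((\<lambda>h. f1 (u h) ^ 2 / f (u h)) \<longlongrightarrow> L) (at_right 0)"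
    using filterlim_compose[OF lim u] by simp
  then have "((\<lambda>h. f1 (u h) ^ 2 / h) \<longlongrightarrow> L) (at_right 0)"
    by (rule Lim_transform_eventually) (use level in \<open>auto elim!: eventually_mono\<close>)
  then have "((\<lambda>h. 1 / sqrt (f1 (u h) ^ 2 / h)) \<longlongrightarrow> 1 / sqrt L) (at_right 0)"
    using \<open>L > 0\<close> by (intro tendsto_intros) auto
  moreover have "\<forall>\<^sub>F h in at_right 0. 1 / sqrt (f1 (u h) ^ 2 / h) = sqrt h / \<bar>f1 (u h)\<bar>"
    using eventually_at_right_less[of 0]
    by (auto elim!: eventually_mono simp: real_sqrt_divide)
  ultimately show ?thesis
    by (rule Lim_transform_eventually)
qed

lemma tendsto_sqrt_mul_deriv_diff_div_on_level_branches:
  fixes f f1 s t :: "real \<Rightarrow> real"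
  assumes lim: "((\<lambda>x. f1 x ^ 2 / f x) \<longlongrightarrow> L) (at 0)" and "L > 0"
    and t_lim: "filterlim t (at_right 0) (at_right 0)"
    and s_lim: "filterlim s (at_left 0) (at_right 0)"
    and t: "\<forall>\<^sub>F h in at_right 0. f1 (t h) > 0 \<and> f (t h) = h"
    and s: "\<forall>\<^sub>F h in at_right 0. f1 (s h) < 0 \<and> f (s h) = h"
  shows "((\<lambda>h. sqrt h * (f1 (t h) - f1 (s h)) / (- (f1 (s h) * f1 (t h))))
           \<longlongrightarrow> 2 / sqrt L) (at_right 0)"
proof -
  have "((\<lambda>h. sqrt h / \<bar>f1 (t h)\<bar> + sqrt h / \<bar>f1 (s h)\<bar>)
      \<longlongrightarrow> 1 / sqrt L + 1 / sqrt L) (at_right 0)"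
  proof (intro tendsto_add tendsto_sqrt_div_abs_deriv_on_level_branch[OF lim \<open>L > 0\<close>])
    show "filterlim t (at 0) (at_right 0)" "filterlim s (at 0) (at_right 0)"
      using filterlim_mono[OF t_lim at_le[OF subset_UNIV] order.refl]
        filterlim_mono[OF s_lim at_le[OF subset_UNIV] order.refl] by auto
    show "\<forall>\<^sub>F h in at_right 0. f (t h) = h" "\<forall>\<^sub>F h in at_right 0. f (s h) = h"
      using t s by (auto elim: eventually_mono)
  qed
  then have "((\<lambda>h. sqrt h / \<bar>f1 (t h)\<bar> + sqrt h / \<bar>f1 (s h)\<bar>) \<longlongrightarrow> 2 / sqrt L) (at_right 0)"
    by simp
  moreover have "\<forall>\<^sub>F h in at_right 0. sqrt h / \<bar>f1 (t h)\<bar> + sqrt h / \<bar>f1 (s h)\<bar> =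
      sqrt h * (f1 (t h) - f1 (s h)) / (- (f1 (s h) * f1 (t h)))"
    using s t by eventually_elim (simp add: field_simps)
  ultimately show ?thesis
    by (rule Lim_transform_eventually)
qed

theorem lemma5:
  fixes f f1 f2 f3 s t :: "real \<Rightarrow> real" and a b :: real
  assumes ab: "a < 0" "0 < b"
    and d1: "\<And>x. x \<in> {a<..<b} \<Longrightarrow> (f has_real_derivative f1 x) (at x)"
    and d2: "\<And>x. x \<in> {a<..<b} \<Longrightarrow> (f1 has_real_derivative f2 x) (at x)"
    and d3: "\<And>x. x \<in> {a<..<b} \<Longrightarrow> (f2 has_real_derivative f3 x) (at x)"
    and c3: "continuous_on {a<..<b} f3"
    and f0: "f 0 = 0" and f10: "f1 0 = 0"
    and convex: "\<And>x. x \<in> {a<..<b} \<Longrightarrow> f2 x > 0"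
    and s: "eventually (\<lambda>h. s h \<in> {a<..<0} \<and> f (s h) = h) (at_right 0)"
    and t: "eventually (\<lambda>h. t h \<in> {0<..<b} \<and> f (t h) = h) (at_right 0)"
  shows "((\<lambda>h. sqrt h * (f1 (t h) - f1 (s h)) / (- (f1 (s h) * f1 (t h))))
           \<longlongrightarrow> sqrt 2 / sqrt (f2 0)) (at_right 0)"
proof -
  have mono_f1: "strict_mono_on {a<..<b} f1"
    using d2 convex by (intro strict_mono_on_if_DERIV_pos) auto
  have f1_pos: "f1 x > 0" if "x \<in> {0<..<b}" for x
    using strict_mono_onD[OF mono_f1, of 0 x] that ab f10 by auto
  have f1_neg: "f1 x < 0" if "x \<in> {a<..<0}" for x
    using strict_mono_onD[OF mono_f1, of x 0] that ab f10 by auto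
  have mono_right: "strict_mono_on {0..<b} f"
    using d1 ab f1_pos by (intro strict_mono_on_if_DERIV_pos[where f' = f1]) auto
  have mono_left: "strict_mono_on {0..<-a} (\<lambda>x. f (- x))"
    using d1 ab f1_neg
    by (intro strict_mono_on_if_DERIV_pos[where f' = "\<lambda>x. - f1 (- x)"])
       (auto intro!: DERIV_mirror[THEN iffD1] d1)
  have "((\<lambda>x. f1 x ^ 2 / f x) \<longlongrightarrow> 2 * f2 0) (at 0)"
  proof (rule tendsto_deriv_squared_div[OF open_greaterThanLessThan _ d1 d2 _ f0 f10])
    show "0 \<in> {a<..<b}" using ab by simp
    then show "isCont f2 0" by (rule DERIV_isCont[OF d3])
    show "f x \<noteq> 0 \<and> f1 x \<noteq> 0" if "x \<in> {a<..<b} - {0}" for x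
      using that f0 f1_pos[of x] f1_neg[of x] strict_mono_onD[OF mono_right, of 0 x]
        strict_mono_onD[OF mono_left, of 0 "- x"]
      by (cases "x > 0") auto
  qed
  moreover have "2 * f2 0 > 0" using convex ab by simp
  moreover note level_branch_tendsto_at_right[OF mono_right f0 t]
  moreover have "filterlim s (at_left 0) (at_right 0)"
    using s by (intro level_branch_tendsto_at_left[OF mono_left f0]) (auto elim!: eventually_mono)
  moreover have "\<forall>\<^sub>F h in at_right 0. f1 (t h) > 0 \<and> f (t h) = h"
    using t by (auto elim!: eventually_mono intro: f1_pos)
  moreover have "\<forall>\<^sub>F h in at_right 0. f1 (s h) < 0 \<and> f (s h) = h"
    using s by (auto elim!: eventually_mono intro: f1_neg)
  ultimately have "((\<lambda>h. sqrt h * (f1 (t h) - f1 (s h)) / (- (f1 (s h) * f1 (t h))))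
      \<longlongrightarrow> 2 / sqrt (2 * f2 0)) (at_right 0)"
    by (rule tendsto_sqrt_mul_deriv_diff_div_on_level_branches)
  moreover have "2 / sqrt (2 * f2 0) = sqrt 2 / sqrt (f2 0)"
    using convex[of 0] ab by (simp add: real_sqrt_mult field_simps flip: real_sqrt_mult_self[of 2])
  ultimately show ?thesis by simp
qed

end
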